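(* For $a>0$ and $b\in\mathbb{R}$ let $h_{a+ib}(x)=e^{-\pi(a+ib)|x|^2}$, $x\in\mathbb{R}^d$. Then for all $1\le p,q\le\infty$, $$\|h_{a+ib}\|_{M^{p,q}}\asymp \frac{\big((a+1)^2+b^2\big)^{\frac d2\left(\frac1p-\frac12\right)}}{a^{\frac{d}{2q}}\big(a(a+1)+b^2\big)^{\frac d2\left(\frac1p-\frac1q\right)}},$$ where $\asymp$ means that each side is bounded by a constant times the other, with constants independent of $a$ and $b$.
   Context: For $f\in\mathcal S'(\mathbb{R}^d)$ and a window $g\in\mathcal S(\mathbb{R}^d)\setminus\{0\}$, $V_gf(x,\omega)=\int f(y)\overline{g(y-x)}e^{-2\pi i y\cdot\omega}\,dy$. For $1\le p,q\le\infty$, $M^{p,q}(\mathbb{R}^d)$ is the space of $f\in\mathcal S'(\mathbb{R}^d)$ with $\|f\|_{M^{p,q}}=\big(\int(\int|V_gf(x,\omega)|^p dx)^{q/p}d\omega\big)^{1/q}<\infty$ (usual modifications if $p$ or $q=\infty$), independent of $g$ up to equivalent norms. *)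

theory Defs
  imports "HOL-Analysis.Analysis"
begin

text \<open>Real powers of extended nonnegative reals (used only with r > 0): infinity stays infinity.\<close>
definition epow :: "ennreal \<Rightarrow> real \<Rightarrow> ennreal" where
  "epow t r = (if t = \<infinity> then \<infinity> else ennreal (enn2real t powr r))"

definition Lp_norm :: "ennreal \<Rightarrow> ('a::euclidean_space \<Rightarrow> ennreal) \<Rightarrow> ennreal" where
  "Lp_norm p F =
     (if p = \<infinity> then Inf {c. AE x in lborel. F x \<le> c}
      else epow (\<integral>\<^sup>+ x. epow (F x) (enn2real p) \<partial>lborel) (1 / enn2real p))"

definition stft :: "('a::euclidean_space \<Rightarrow> complex) \<Rightarrow> ('a \<Rightarrow> complex) \<Rightarrow> 'a \<Rightarrow> 'a \<Rightarrow> complex" where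
  "stft g f x \<omega> = (\<integral> y. f y * cnj (g (y - x)) * cis (- 2 * pi * (y \<bullet> \<omega>)) \<partial>lborel)"

definition mod_norm :: "ennreal \<Rightarrow> ennreal \<Rightarrow> ('a::euclidean_space \<Rightarrow> complex) \<Rightarrow> ('a \<Rightarrow> complex) \<Rightarrow> ennreal" where
  "mod_norm p q g f = Lp_norm q (\<lambda>\<omega>. Lp_norm p (\<lambda>x. ennreal (cmod (stft g f x \<omega>))))"

definition gauss_window :: "'a::euclidean_space \<Rightarrow> complex" where
  "gauss_window x = complex_of_real (exp (- pi * norm x ^ 2))"

definition gauss_chirp :: "real \<Rightarrow> real \<Rightarrow> 'a::euclidean_space \<Rightarrow> complex" where
  "gauss_chirp a b x = exp (- (complex_of_real pi * Complex a b) * complex_of_real (norm x ^ 2))"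

end

theory Submission
  imports Defs "HOL-Probability.Probability"
begin

text \<open>The integrand of \<open>V\<^sub>g h\<^sub>a\<^sub>+\<^sub>i\<^sub>b (x, \<omega>)\<close> factorises over the coordinates into
  one-dimensional Gaussians with complex quadratic exponent, whose integrals have explicit moduli.
  With \<open>D = (a + 1)\<^sup>2 + b\<^sup>2\<close> and \<open>A = a (a + 1) + b\<^sup>2\<close> this gives
  \<open>\<bar>V\<^sub>g h\<^sub>a\<^sub>+\<^sub>i\<^sub>b (x, \<omega>)\<bar> = D\<^bsup>-d/4\<^esup> exp (- pi a \<bar>\<omega>\<bar>\<^sup>2 / A) exp (- pi A \<bar>x + b \<omega> / A\<bar>\<^sup>2 / D)\<close>,
  a Gaussian in \<open>x\<close> whose centre moves with \<open>\<omega>\<close> times a Gaussian in \<open>\<omega>\<close>. The \<open>L\<^sup>p\<close> norm of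
  \<open>exp (- c \<bar>x - s\<bar>\<^sup>2)\<close> is \<open>p\<^bsup>-d/(2p)\<^esup> (pi / c)\<^bsup>d/(2p)\<^esup>\<close> independently of \<open>s\<close>, so the
  \<open>M\<^sup>p\<^sup>,\<^sup>q\<close> norm equals the right-hand side exactly, up to a factor depending only on \<open>p\<close>,
  \<open>q\<close> and \<open>d\<close>.\<close>

section \<open>Gaussian integrals on the real line\<close>

lemma has_bochner_integral_exp_quadratic:
  fixes A B :: real assumes A: "A > 0"
  shows "has_bochner_integral lborel (\<lambda>u. exp (- A * u\<^sup>2 + B * u)) (sqrt (pi / A) * exp (B\<^sup>2 / (4 * A)))"
proof -
  define m where "m = B / (2 * A)"
  define s where "s = 1 / sqrt (2 * A)"
  have s2: "s\<^sup>2 = 1 / (2 * A)" using A by (simp add: s_def power_divide)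
  have eq: "exp (- A * u\<^sup>2 + B * u) = (sqrt (pi / A) * exp (B\<^sup>2 / (4 * A))) * normal_density m s u" for u
  proof -
    have "sqrt (2 * pi * s\<^sup>2) = sqrt (pi / A)" using s2 by simp
    moreover have "- A * u\<^sup>2 + B * u = B\<^sup>2 / (4 * A) + (-(u - m)\<^sup>2/ (2 * s\<^sup>2))"
      using A unfolding s2 m_def by (simp add: field_simps power2_eq_square)
    moreover have "sqrt (pi / A) > 0" using A by simp
    ultimately show ?thesis using A unfolding normal_density_def by (simp add: exp_add[symmetric])
  qed
  have "has_bochner_integral lborel (\<lambda>u. (sqrt (pi / A) * exp (B\<^sup>2 / (4 * A))) * normal_density m s u)
      ((sqrt (pi / A) * exp (B\<^sup>2 / (4 * A))) * 1)"
    using A by (intro has_bochner_integral_mult_right) (simp add: has_bochner_integral_iff s_def)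
  then show ?thesis unfolding eq by simp
qed

lemma integral_std_normal_density_cis:
  "(\<integral>x. std_normal_density x *\<^sub>R cis (t * x) \<partial>lborel) = complex_of_real (exp (- (t\<^sup>2) / 2))"
proof -
  have "char std_normal_distribution t = (\<integral>x. std_normal_density x *\<^sub>R cis (t * x) \<partial>lborel)"
    unfolding char_def by (subst integral_density) (auto simp: cis_conv_exp mult.commute)
  then show ?thesis by (simp add: char_std_normal_distribution)
qed

text \<open>The value is \<open>sqrt (pi / A) * exp ((B + i C)\<^sup>2 / (4 * A))\<close>, split into modulus and phase.\<close>
lemma has_bochner_integral_exp_quadratic_cis:
  fixes A B C :: real assumes A: "A > 0"
  shows "has_bochner_integral lborel (\<lambda>u. complex_of_real (exp (- A * u\<^sup>2 + B * u)) * cis (C * u))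
     (complex_of_real (sqrt (pi / A) * exp ((B\<^sup>2 - C\<^sup>2) / (4 * A))) * cis (B * C / (2 * A)))"
proof -
  define F where "F = (\<lambda>u. complex_of_real (exp (- A * u\<^sup>2 + B * u)) * cis (C * u))"
  define m where "m = B / (2 * A)"
  define s where "s = 1 / sqrt (2 * A)"
  have s0: "s > 0" using A by (simp add: s_def)
  have s2: "s\<^sup>2 = 1 / (2 * A)" using A by (simp add: s_def power_divide)
  have F_meas: "F \<in> borel_measurable borel"
    unfolding F_def by (intro borel_measurable_continuous_onI continuous_intros)
  have "integrable lborel (\<lambda>u. norm (F u))"
    using has_bochner_integral_exp_quadratic[OF A, of B]
    by (simp add: F_def norm_mult has_bochner_integral_iff)
  then have F_int: "integrable lborel F" using F_meas by (simp add: integrable_norm_iff)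
  define K where "K = complex_of_real (exp (B\<^sup>2 / (4 * A)) * sqrt (2 * pi)) * cis (C * m)"
  have F_affine: "F (m + s * x) = K * (std_normal_density x *\<^sub>R cis ((C * s) * x))" for x
  proof -
    have "- A * (m + s * x)\<^sup>2 + B * (m + s * x) = B\<^sup>2 / (4 * A) + (- x\<^sup>2 / 2)"
      using A s2 unfolding m_def by (simp add: field_simps power2_eq_square)
    then have "exp (- A * (m + s * x)\<^sup>2 + B * (m + s * x)) = exp (B\<^sup>2 / (4 * A)) * exp (- x\<^sup>2 / 2)"
      by (simp only: exp_add)
    moreover have "cis (C * (m + s * x)) = cis (C * m) * cis (C * s * x)"
      by (simp add: cis_mult algebra_simps)
    ultimately show ?thesis
      unfolding F_def K_def std_normal_density_def by (simp add: exp_add scaleR_conv_of_real)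
  qed
  have "integral\<^sup>L lborel F = s *\<^sub>R (\<integral>x. F (m + s * x) \<partial>lborel)"
    using s0 lborel_integral_real_affine[of s F m] by simp
  also have "\<dots> = s *\<^sub>R (K * complex_of_real (exp (- ((C * s)\<^sup>2) / 2)))"
    by (simp only: F_affine integral_mult_right_zero integral_std_normal_density_cis)
  also have "\<dots> = complex_of_real (sqrt (pi / A) * exp ((B\<^sup>2 - C\<^sup>2) / (4 * A))) * cis (B * C / (2 * A))"
  proof -
    have sqrt_eq: "s * sqrt (2 * pi) = sqrt (pi / A)" using A
      by (simp add: s_def real_sqrt_divide real_sqrt_mult field_simps)
    have exp_eq: "exp (B\<^sup>2 / (4 * A)) * exp (- ((C * s)\<^sup>2) / 2) = exp ((B\<^sup>2 - C\<^sup>2) / (4 * A))"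
      using A s2 by (simp add: exp_add[symmetric] power_mult_distrib field_simps)
    have phase_eq: "C * m = B * C / (2 * A)" by (simp add: m_def)
    have "s *\<^sub>R (K * complex_of_real (exp (- ((C * s)\<^sup>2) / 2))) =
       complex_of_real ((s * sqrt (2 * pi)) * (exp (B\<^sup>2 / (4 * A)) * exp (- ((C * s)\<^sup>2) / 2))) * cis (C * m)"
      unfolding K_def by (simp add: scaleR_conv_of_real algebra_simps)
    then show ?thesis unfolding sqrt_eq exp_eq phase_eq .
  qed
  finally show ?thesis using F_int unfolding F_def has_bochner_integral_iff by simp
qed

lemma integrable_lborel_pair_mult_cnj_affine:
  fixes f :: "real \<Rightarrow> complex" and c :: real
  assumes f: "integrable lborel f" and c: "c \<noteq> 0"
  shows "integrable (lborel \<Otimes>\<^sub>M lborel) (\<lambda>(x, v). f x * cnj (f (x + c * v)))"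
proof -
  have [measurable]: "f \<in> borel_measurable borel" "cnj \<in> borel_measurable (borel :: complex measure)"
    using f by (auto intro: borel_measurable_continuous_onI continuous_intros)
  define I where "I = (\<integral>\<^sup>+t. ennreal (norm (f t)) \<partial>lborel)"
  have I_fin: "I < \<infinity>" using f by (simp add: I_def integrable_iff_bounded)
  have inner: "(\<integral>\<^sup>+v. ennreal (norm (f x) * norm (f (x + c * v))) \<partial>lborel) = ennreal (norm (f x)) * (I / \<bar>c\<bar>)" for x
  proof -
    have "I = \<bar>c\<bar> * (\<integral>\<^sup>+v. ennreal (norm (f (x + c * v))) \<partial>lborel)"
      unfolding I_def using c by (intro nn_integral_real_affine) auto
    then have "(\<integral>\<^sup>+v. ennreal (norm (f (x + c * v))) \<partial>lborel) = I / \<bar>c\<bar>"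
      using c by (simp only: mult.commute[of "ennreal \<bar>c\<bar>"]) (simp add: ennreal_mult_divide_eq)
    then show ?thesis
      by (simp add: ennreal_mult nn_integral_cmult)
  qed
  have "(\<integral>\<^sup>+z. ennreal (norm ((\<lambda>(x, v). f x * cnj (f (x + c * v))) z)) \<partial>(lborel \<Otimes>\<^sub>M lborel))
      = (\<integral>\<^sup>+x. \<integral>\<^sup>+v. ennreal (norm (f x) * norm (f (x + c * v))) \<partial>lborel \<partial>lborel)"
    by (subst lborel.nn_integral_fst[symmetric]) (auto simp: norm_mult)
  also have "\<dots> = I * (I / \<bar>c\<bar>)"
    by (simp only: inner, subst nn_integral_multc) (auto simp: I_def)
  also have "\<dots> < \<infinity>"
    using I_fin c by (simp add: ennreal_mult_eq_top_iff ennreal_divide_eq_top_iff less_top[symmetric])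
  finally show ?thesis by (subst integrable_iff_bounded) simp
qed

text \<open>Substituting \<open>y = x - 2 v\<close> and then \<open>x = v + u\<close> symmetrises the double integral
  \<open>\<integral>\<integral> f x * cnj (f y)\<close> around the midpoint of \<open>x\<close> and \<open>y\<close>.\<close>
lemma integral_mult_cnj_integral:
  fixes f :: "real \<Rightarrow> complex"
  assumes f: "integrable lborel f"
  shows "integral\<^sup>L lborel f * cnj (integral\<^sup>L lborel f) =
    2 *\<^sub>R (\<integral>v. \<integral>u. f (v + u) * cnj (f (u - v)) \<partial>lborel \<partial>lborel)"
proof -
  define G where "G = (\<lambda>x v. f x * cnj (f (x + -2 * v)))"
  have "integral\<^sup>L lborel f * cnj (integral\<^sup>L lborel f) = (\<integral>x. \<integral>y. f x * cnj (f y) \<partial>lborel \<partial>lborel)"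
    by simp
  also have "\<dots> = (\<integral>x. 2 *\<^sub>R (\<integral>v. G x v \<partial>lborel) \<partial>lborel)"
  proof (intro Bochner_Integration.integral_cong refl)
    fix x
    show "(\<integral>y. f x * cnj (f y) \<partial>lborel) = 2 *\<^sub>R (\<integral>v. G x v \<partial>lborel)"
      unfolding G_def by (subst lborel_integral_real_affine[where c="-2" and t=x]) auto
  qed
  also have "\<dots> = 2 *\<^sub>R (\<integral>x. \<integral>v. G x v \<partial>lborel \<partial>lborel)" by simp
  also have "(\<integral>x. \<integral>v. G x v \<partial>lborel \<partial>lborel) = (\<integral>v. \<integral>x. G x v \<partial>lborel \<partial>lborel)"
    by (rule lborel_pair.Fubini_integral[symmetric])
      (unfold G_def, rule integrable_lborel_pair_mult_cnj_affine[OF f], simp)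
  also have "\<dots> = (\<integral>v. \<integral>u. f (v + u) * cnj (f (u - v)) \<partial>lborel \<partial>lborel)"
  proof -
    have "(\<integral>x. G x v \<partial>lborel) = (\<integral>u. f (v + u) * cnj (f (u - v)) \<partial>lborel)" for v
      using lborel_integral_real_affine[of 1 "\<lambda>x. G x v" v] by (simp add: G_def algebra_simps)
    then show ?thesis by simp
  qed
  finally show ?thesis .
qed

lemma integrable_exp_quadratic_cis_quadratic:
  fixes \<alpha> \<beta> B C :: real assumes \<alpha>: "\<alpha> > 0"
  shows "integrable lborel (\<lambda>t. complex_of_real (exp (- \<alpha> * t\<^sup>2 + B * t)) * cis (- \<beta> * t\<^sup>2 + C * t))"
    (is "integrable lborel ?f")
proof -
  have "integrable lborel (\<lambda>t. norm (?f t))"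
    using has_bochner_integral_exp_quadratic[OF \<alpha>, of B] by (simp add: has_bochner_integral_iff norm_mult)
  moreover have "?f \<in> borel_measurable borel"
    by (intro borel_measurable_continuous_onI continuous_intros)
  ultimately show ?thesis using integrable_norm_iff[of ?f lborel] by simp
qed

lemma integral_chirp_shift_mult_cnj:
  fixes \<alpha> \<beta> B C v :: real assumes \<alpha>: "\<alpha> > 0"
  defines "f \<equiv> \<lambda>t. complex_of_real (exp (- \<alpha> * t\<^sup>2 + B * t)) * cis (- \<beta> * t\<^sup>2 + C * t)"
  shows "(\<integral>u. f (v + u) * cnj (f (u - v)) \<partial>lborel) =
    complex_of_real (sqrt (pi / (2 * \<alpha>)) * exp (B\<^sup>2 / (2 * \<alpha>))) *
    (complex_of_real (exp (- (2 * (\<alpha>\<^sup>2 + \<beta>\<^sup>2) / \<alpha>) * v\<^sup>2 + 0 * v)) * cis (2 * (\<alpha> * C - \<beta> * B) / \<alpha> * v))"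
proof -
  have "f (v + u) * cnj (f (u - v)) = (complex_of_real (exp (- 2 * \<alpha> * v\<^sup>2)) * cis (2 * C * v)) *
       (complex_of_real (exp (- (2 * \<alpha>) * u\<^sup>2 + (2 * B) * u)) * cis ((- 4 * \<beta> * v) * u))" for u
  proof -
    have "f (v + u) * cnj (f (u - v)) =
        complex_of_real (exp (- \<alpha> * (v + u)\<^sup>2 + B * (v + u)) * exp (- \<alpha> * (u - v)\<^sup>2 + B * (u - v)))
        * (cis (- \<beta> * (v + u)\<^sup>2 + C * (v + u)) * cis (\<beta> * (u - v)\<^sup>2 - C * (u - v)))"
      unfolding f_def by (simp add: cis_cnj algebra_simps)
    also have "\<dots> = complex_of_real (exp (- 2 * \<alpha> * v\<^sup>2) * exp (- (2 * \<alpha>) * u\<^sup>2 + (2 * B) * u))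
        * (cis (2 * C * v) * cis ((- 4 * \<beta> * v) * u))"
      unfolding exp_add[symmetric] cis_mult
      by (intro arg_cong2[where f="(*)"] arg_cong[where f=complex_of_real] arg_cong[where f=exp]
          arg_cong[where f=cis]) (simp_all add: power2_eq_square algebra_simps)
    finally show ?thesis by (simp add: algebra_simps)
  qed
  then have "(\<integral>u. f (v + u) * cnj (f (u - v)) \<partial>lborel) =
      (complex_of_real (exp (- 2 * \<alpha> * v\<^sup>2)) * cis (2 * C * v)) *
      (complex_of_real (sqrt (pi / (2 * \<alpha>)) * exp (((2 * B)\<^sup>2 - (- 4 * \<beta> * v)\<^sup>2) / (4 * (2 * \<alpha>))))
        * cis ((2 * B) * (- 4 * \<beta> * v) / (2 * (2 * \<alpha>))))"
    using \<alpha> by (simp only: integral_mult_right_zero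
        has_bochner_integral_integral_eq[OF has_bochner_integral_exp_quadratic_cis])
  moreover have "exp (- 2 * \<alpha> * v\<^sup>2) * exp (((2 * B)\<^sup>2 - (- 4 * \<beta> * v)\<^sup>2) / (4 * (2 * \<alpha>)))
      = exp (B\<^sup>2 / (2 * \<alpha>)) * exp (- (2 * (\<alpha>\<^sup>2 + \<beta>\<^sup>2) / \<alpha>) * v\<^sup>2 + 0 * v)"
    unfolding exp_add[symmetric] using \<alpha>
    by (intro arg_cong[where f=exp]) (simp add: field_simps power2_eq_square)
  moreover have "cis (2 * C * v) * cis ((2 * B) * (- 4 * \<beta> * v) / (2 * (2 * \<alpha>))) =
      cis (2 * (\<alpha> * C - \<beta> * B) / \<alpha> * v)"
    unfolding cis_mult using \<alpha> by (intro arg_cong[where f=cis]) (simp add: field_simps)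
  ultimately show ?thesis
    by (simp add: algebra_simps of_real_mult[symmetric] del: of_real_mult)
qed

text \<open>Only the modulus of the complex Gaussian integral
  \<open>\<integral> exp (- (\<alpha> + i \<beta>) t\<^sup>2 + (B + i C) t) dt = sqrt (pi / z) * exp ((B + i C)\<^sup>2 / (4 z))\<close>,
  \<open>z = \<alpha> + i \<beta>\<close>, is needed. It follows from real Gaussian integrals, without any analytic
  continuation, by writing \<open>\<bar>T\<bar>\<^sup>2 = T * cnj T\<close> as a double integral.\<close>
lemma cmod_integral_exp_quadratic_cis_quadratic:
  fixes \<alpha> \<beta> B C :: real assumes \<alpha>: "\<alpha> > 0"
  shows "(cmod (\<integral>t. complex_of_real (exp (- \<alpha> * t\<^sup>2 + B * t)) * cis (- \<beta> * t\<^sup>2 + C * t) \<partial>lborel))\<^sup>2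
       = pi / sqrt (\<alpha>\<^sup>2 + \<beta>\<^sup>2) * exp ((\<alpha> * (B\<^sup>2 - C\<^sup>2) + 2 * \<beta> * B * C) / (2 * (\<alpha>\<^sup>2 + \<beta>\<^sup>2)))"
proof -
  define f where "f = (\<lambda>t. complex_of_real (exp (- \<alpha> * t\<^sup>2 + B * t)) * cis (- \<beta> * t\<^sup>2 + C * t))"
  define N where "N = \<alpha>\<^sup>2 + \<beta>\<^sup>2"
  define \<gamma> where "\<gamma> = 2 * N / \<alpha>"
  define \<delta> where "\<delta> = 2 * (\<alpha> * C - \<beta> * B) / \<alpha>"
  define K where "K = sqrt (pi / (2 * \<alpha>)) * exp (B\<^sup>2 / (2 * \<alpha>))"
  have N0: "N > 0" using \<alpha> by (simp add: N_def add_pos_nonneg)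
  have \<gamma>: "\<gamma> > 0" using \<alpha> N0 by (simp add: \<gamma>_def)
  have f_int: "integrable lborel f"
    unfolding f_def by (rule integrable_exp_quadratic_cis_quadratic[OF \<alpha>])
  have inner: "(\<integral>u. f (v + u) * cnj (f (u - v)) \<partial>lborel) =
      complex_of_real K * (complex_of_real (exp (- \<gamma> * v\<^sup>2 + 0 * v)) * cis (\<delta> * v))" for v
    unfolding f_def K_def \<gamma>_def \<delta>_def N_def by (rule integral_chirp_shift_mult_cnj[OF \<alpha>])
  have "integral\<^sup>L lborel f * cnj (integral\<^sup>L lborel f) =
      2 *\<^sub>R (complex_of_real K * (complex_of_real (sqrt (pi / \<gamma>) * exp ((0\<^sup>2 - \<delta>\<^sup>2) / (4 * \<gamma>)))
        * cis (0 * \<delta> / (2 * \<gamma>))))"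
    unfolding integral_mult_cnj_integral[OF f_int] inner
    using \<gamma> by (simp only: integral_mult_right_zero
        has_bochner_integral_integral_eq[OF has_bochner_integral_exp_quadratic_cis])
  also have "\<dots> = complex_of_real (pi / sqrt N * exp ((\<alpha> * (B\<^sup>2 - C\<^sup>2) + 2 * \<beta> * B * C) / (2 * N)))"
  proof -
    have "pi / (2 * \<alpha>) * (pi / \<gamma>) = (pi / (2 * sqrt N))\<^sup>2"
      using \<alpha> N0 by (simp add: \<gamma>_def power_divide field_simps power2_eq_square)
    then have sqrt_eq: "2 * (sqrt (pi / (2 * \<alpha>)) * sqrt (pi / \<gamma>)) = pi / sqrt N"
      using N0 by (simp add: real_sqrt_mult[symmetric])
    have \<delta>_eq: "(0\<^sup>2 - \<delta>\<^sup>2) / (4 * \<gamma>) = - ((\<alpha> * C - \<beta> * B)\<^sup>2 / (2 * \<alpha> * N))"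
      using \<alpha> N0 unfolding \<gamma>_def \<delta>_def by (simp add: power_divide field_simps power2_eq_square)
    have exponent_eq: "B\<^sup>2 / (2 * \<alpha>) + - ((\<alpha> * C - \<beta> * B)\<^sup>2 / (2 * \<alpha> * N)) =
        (\<alpha> * (B\<^sup>2 - C\<^sup>2) + 2 * \<beta> * B * C) / (2 * N)"
      using \<alpha> N0 by (simp add: divide_simps) (simp add: N_def power2_eq_square algebra_simps)
    have "2 *\<^sub>R (complex_of_real K * (complex_of_real (sqrt (pi / \<gamma>) * exp ((0\<^sup>2 - \<delta>\<^sup>2) / (4 * \<gamma>)))
        * cis (0 * \<delta> / (2 * \<gamma>)))) = complex_of_real (2 * (sqrt (pi / (2 * \<alpha>)) * sqrt (pi / \<gamma>))
        * exp (B\<^sup>2 / (2 * \<alpha>) + (0\<^sup>2 - \<delta>\<^sup>2) / (4 * \<gamma>)))"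
      unfolding K_def exp_add by (simp add: scaleR_conv_of_real mult_ac)
    then show ?thesis unfolding sqrt_eq \<delta>_eq exponent_eq .
  qed
  finally show ?thesis
    unfolding complex_norm_square[symmetric] f_def N_def of_real_eq_iff .
qed

section \<open>The short-time Fourier transform of a Gaussian chirp\<close>

text \<open>The integrand of \<open>stft gauss_window (gauss_chirp a b) x \<omega>\<close> is the product over the coordinates
  \<open>e\<close> of \<open>stft_chirp_factor a b (x \<bullet> e) (\<omega> \<bullet> e) (y \<bullet> e)\<close>.\<close>
definition stft_chirp_factor :: "real \<Rightarrow> real \<Rightarrow> real \<Rightarrow> real \<Rightarrow> real \<Rightarrow> complex" where
  "stft_chirp_factor a b x w t =
     complex_of_real (exp (- (pi * (a + 1)) * t\<^sup>2 + (2 * pi * x) * t)) * cis (- (pi * b) * t\<^sup>2 + (-2 * pi * w) * t)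
     * complex_of_real (exp (- pi * x\<^sup>2))"

lemma integrable_stft_chirp_factor:
  "a > -1 \<Longrightarrow> integrable lborel (stft_chirp_factor a b x w)"
  unfolding stft_chirp_factor_def
  by (intro integrable_mult_left integrable_exp_quadratic_cis_quadratic) simp

lemma cmod_integral_stft_chirp_factor:
  fixes a b x w :: real
  assumes a: "a > 0"
  defines "D \<equiv> (a + 1)\<^sup>2 + b\<^sup>2" and "A \<equiv> a * (a + 1) + b\<^sup>2"
  shows "cmod (integral\<^sup>L lborel (stft_chirp_factor a b x w)) =
    D powr (-1/4) * exp (- pi * a / A * w\<^sup>2) * exp (- pi * A / D * (x + b / A * w)\<^sup>2)"
proof -
  define \<alpha> \<beta> B C where "\<alpha> = pi * (a + 1)" and "\<beta> = pi * b" and "B = 2 * pi * x" and "C = -2 * pi * w"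
  have \<alpha>: "\<alpha> > 0" using a by (simp add: \<alpha>_def)
  have D0: "D > 0" using a by (simp add: D_def add_pos_nonneg)
  have A0: "A > 0" using a by (simp add: A_def add_pos_nonneg)
  have norm_eq: "\<alpha>\<^sup>2 + \<beta>\<^sup>2 = pi\<^sup>2 * D"
    unfolding \<alpha>_def \<beta>_def D_def by (simp add: power2_eq_square algebra_simps)
  have "(cmod (integral\<^sup>L lborel (stft_chirp_factor a b x w)))\<^sup>2 =
      (cmod (\<integral>t. complex_of_real (exp (- \<alpha> * t\<^sup>2 + B * t)) * cis (- \<beta> * t\<^sup>2 + C * t) \<partial>lborel))\<^sup>2
      * (exp (- pi * x\<^sup>2))\<^sup>2"
    unfolding stft_chirp_factor_def \<alpha>_def \<beta>_def B_def C_def by (simp add: norm_mult power_mult_distrib)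
  also have "\<dots> = pi / sqrt (\<alpha>\<^sup>2 + \<beta>\<^sup>2) *
      exp ((\<alpha> * (B\<^sup>2 - C\<^sup>2) + 2 * \<beta> * B * C) / (2 * (\<alpha>\<^sup>2 + \<beta>\<^sup>2)) + 2 * (- pi * x\<^sup>2))"
    unfolding cmod_integral_exp_quadratic_cis_quadratic[OF \<alpha>] exp_add[of _ "2 * (- pi * x\<^sup>2)"] exp_double
    by (simp only: mult.assoc)
  also have "pi / sqrt (\<alpha>\<^sup>2 + \<beta>\<^sup>2) = (D powr (-1/4))\<^sup>2"
  proof -
    have "(D powr (-1/4))\<^sup>2 = D powr (-1/2)" using D0 by (simp add: powr_power)
    then show ?thesis using D0 by (simp add: norm_eq real_sqrt_mult powr_minus_divide powr_half_sqrt)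
  qed
  also have "(\<alpha> * (B\<^sup>2 - C\<^sup>2) + 2 * \<beta> * B * C) / (2 * (\<alpha>\<^sup>2 + \<beta>\<^sup>2)) + 2 * (- pi * x\<^sup>2)
      = 2 * (- pi * a / A * w\<^sup>2 + - pi * A / D * (x + b / A * w)\<^sup>2)"
  proof -
    have "A * (a + 1) = a * D + b\<^sup>2" unfolding A_def D_def by (simp add: power2_eq_square algebra_simps)
    then show ?thesis using D0 A0 unfolding norm_eq unfolding \<alpha>_def \<beta>_def B_def C_def
      by (simp add: divide_simps power2_eq_square) (simp add: A_def D_def power2_eq_square algebra_simps)
  qed
  finally have "(cmod (integral\<^sup>L lborel (stft_chirp_factor a b x w)))\<^sup>2 =
      (D powr (-1/4) * exp (- pi * a / A * w\<^sup>2) * exp (- pi * A / D * (x + b / A * w)\<^sup>2))\<^sup>2"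
    by (simp only: exp_double exp_add distrib_left power_mult_distrib)
  then show ?thesis by (rule power2_eq_imp_eq) auto
qed

lemma integral_lborel_prod:
  fixes f :: "'a::euclidean_space \<Rightarrow> real \<Rightarrow> complex"
  assumes int: "\<And>b. b \<in> Basis \<Longrightarrow> integrable lborel (f b)"
  shows "(\<integral>x. (\<Prod>b\<in>Basis. f b (x \<bullet> b)) \<partial>lborel) = (\<Prod>b\<in>Basis. integral\<^sup>L lborel (f b))"
proof -
  interpret P: product_sigma_finite "\<lambda>_::'a. lborel::real measure"
    by (simp add: product_sigma_finite_def sigma_finite_lborel)
  have [measurable]: "\<And>b. b \<in> Basis \<Longrightarrow> f b \<in> borel_measurable borel"
    using int borel_measurable_integrable by fastforce
  have "(\<integral>x. (\<Prod>b\<in>Basis. f b (x \<bullet> b)) \<partial>lborel) =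
     (\<integral>g. (\<Prod>b\<in>Basis. f b ((\<Sum>c\<in>Basis. g c *\<^sub>R c) \<bullet> b)) \<partial>(\<Pi>\<^sub>M b\<in>Basis. lborel))"
    by (subst lborel_eq) (rule integral_distr; measurable)
  also have "\<dots> = (\<integral>g. (\<Prod>b\<in>Basis. f b (g b)) \<partial>(\<Pi>\<^sub>M b\<in>Basis. lborel))"
    by (intro Bochner_Integration.integral_cong refl prod.cong)
      (simp_all add: inner_sum_left inner_Basis if_distrib sum.delta cong: if_cong)
  also have "\<dots> = (\<Prod>b\<in>Basis. integral\<^sup>L lborel (f b))"
    by (rule P.product_integral_prod) (auto intro: int)
  finally show ?thesis .
qed

lemma prod_cis: "finite I \<Longrightarrow> (\<Prod>i\<in>I. cis (f i)) = cis (\<Sum>i\<in>I. f i)"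
  by (induction I rule: finite_induct) (simp_all add: cis_mult add.commute)

lemma power2_norm_eq_sum_Basis: "(norm (y::'a::euclidean_space))\<^sup>2 = (\<Sum>b\<in>Basis. (y \<bullet> b)\<^sup>2)"
  unfolding power2_norm_eq_inner by (subst euclidean_inner) (simp add: power2_eq_square)

lemma stft_integrand_gauss_chirp_eq_prod:
  fixes x y \<omega> :: "'a::euclidean_space"
  shows "gauss_chirp a b y * cnj (gauss_window (y - x)) * cis (- 2 * pi * (y \<bullet> \<omega>)) =
    (\<Prod>e\<in>Basis. stft_chirp_factor a b (x \<bullet> e) (\<omega> \<bullet> e) (y \<bullet> e))"
proof -
  define S1 where "S1 = (\<Sum>e\<in>Basis. - (pi * (a + 1)) * (y \<bullet> e)\<^sup>2 + (2 * pi * (x \<bullet> e)) * (y \<bullet> e) + (- pi * (x \<bullet> e)\<^sup>2))"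
  define S2 where "S2 = (\<Sum>e\<in>Basis. - (pi * b) * (y \<bullet> e)\<^sup>2 + (-2 * pi * (\<omega> \<bullet> e)) * (y \<bullet> e))"
  have factor_eq: "stft_chirp_factor a b (x \<bullet> e) (\<omega> \<bullet> e) (y \<bullet> e) =
      complex_of_real (exp (- (pi * (a + 1)) * (y \<bullet> e)\<^sup>2 + (2 * pi * (x \<bullet> e)) * (y \<bullet> e) + (- pi * (x \<bullet> e)\<^sup>2)))
      * cis (- (pi * b) * (y \<bullet> e)\<^sup>2 + (-2 * pi * (\<omega> \<bullet> e)) * (y \<bullet> e))" for e
    unfolding stft_chirp_factor_def exp_add[of "_ + _"] by (simp only: of_real_mult mult_ac)
  have prod_eq: "(\<Prod>e\<in>Basis. stft_chirp_factor a b (x \<bullet> e) (\<omega> \<bullet> e) (y \<bullet> e)) = complex_of_real (exp S1) * cis S2"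
    unfolding factor_eq prod.distrib S1_def S2_def
    by (simp only: of_real_prod[symmetric] exp_sum[OF finite_Basis, symmetric] prod_cis[OF finite_Basis])
  have S1_eq: "S1 = - pi * a * (norm y)\<^sup>2 + - pi * (norm (y - x))\<^sup>2"
    unfolding S1_def power2_norm_eq_sum_Basis[of y] power2_norm_eq_sum_Basis[of "y - x"]
    by (simp add: sum_distrib_left sum.distrib[symmetric] inner_diff_left power2_diff algebra_simps)
  have S2_eq: "S2 = - pi * b * (norm y)\<^sup>2 + - 2 * pi * (y \<bullet> \<omega>)"
    unfolding S2_def power2_norm_eq_sum_Basis euclidean_inner[of y \<omega>]
    by (simp add: sum_distrib_left sum.distrib[symmetric] algebra_simps)
  have chirp_eq: "gauss_chirp a b y = complex_of_real (exp (- pi * a * (norm y)\<^sup>2)) * cis (- pi * b * (norm y)\<^sup>2)"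
    unfolding gauss_chirp_def by (subst exp_eq_polar) simp
  have window_eq: "cnj (gauss_window (y - x)) = complex_of_real (exp (- pi * (norm (y - x))\<^sup>2))"
    unfolding gauss_window_def by simp
  show ?thesis unfolding prod_eq S1_eq S2_eq chirp_eq window_eq exp_add cis_mult[symmetric]
    by (simp only: of_real_mult mult_ac)
qed

lemma norm_stft_gauss_chirp:
  fixes x \<omega> :: "'a::euclidean_space" and a b :: real
  assumes a: "a > 0"
  defines "D \<equiv> (a + 1)\<^sup>2 + b\<^sup>2" and "A \<equiv> a * (a + 1) + b\<^sup>2"
  shows "norm (stft gauss_window (gauss_chirp a b) x \<omega>) =
    D powr (- real DIM('a) / 4) * exp (- pi * a / A * (norm \<omega>)\<^sup>2)
     * exp (- pi * A / D * (norm (x - (- (b / A)) *\<^sub>R \<omega>))\<^sup>2)"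
proof -
  have D0: "D > 0" using a by (simp add: D_def add_pos_nonneg)
  have "stft gauss_window (gauss_chirp a b) x \<omega> =
      (\<integral>y. (\<Prod>e\<in>Basis. stft_chirp_factor a b (x \<bullet> e) (\<omega> \<bullet> e) (y \<bullet> e)) \<partial>lborel)"
    unfolding stft_def stft_integrand_gauss_chirp_eq_prod ..
  also have "\<dots> = (\<Prod>e\<in>Basis. integral\<^sup>L lborel (stft_chirp_factor a b (x \<bullet> e) (\<omega> \<bullet> e)))"
    using a by (intro integral_lborel_prod integrable_stft_chirp_factor) simp
  finally have "norm (stft gauss_window (gauss_chirp a b) x \<omega>) =
      (\<Prod>e\<in>Basis. cmod (integral\<^sup>L lborel (stft_chirp_factor a b (x \<bullet> e) (\<omega> \<bullet> e))))"
    by (simp add: prod_norm)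
  also have "\<dots> = (\<Prod>e\<in>Basis. D powr (-1/4) *
      (exp (- pi * a / A * (\<omega> \<bullet> e)\<^sup>2) * exp (- pi * A / D * (x \<bullet> e + b / A * (\<omega> \<bullet> e))\<^sup>2)))"
    unfolding cmod_integral_stft_chirp_factor[OF a] D_def A_def by (simp only: mult.assoc)
  also have "\<dots> = (D powr (-1/4)) ^ DIM('a) * (exp (\<Sum>e\<in>Basis. - pi * a / A * (\<omega> \<bullet> e)\<^sup>2) *
      exp (\<Sum>e\<in>Basis. - pi * A / D * (x \<bullet> e + b / A * (\<omega> \<bullet> e))\<^sup>2))"
    by (simp only: prod.distrib prod_constant exp_sum[OF finite_Basis])
  also have "(\<Sum>e\<in>Basis. - pi * a / A * (\<omega> \<bullet> e)\<^sup>2) = - pi * a / A * (norm \<omega>)\<^sup>2"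
    by (simp add: power2_norm_eq_sum_Basis sum_distrib_left)
  also have "(\<Sum>e\<in>Basis. - pi * A / D * (x \<bullet> e + b / A * (\<omega> \<bullet> e))\<^sup>2) =
      - pi * A / D * (norm (x - (- (b / A)) *\<^sub>R \<omega>))\<^sup>2"
    by (simp add: power2_norm_eq_sum_Basis sum_distrib_left inner_add_left)
  also have "(D powr (-1/4)) ^ DIM('a) = D powr (- real DIM('a) / 4)"
    using D0 by (simp add: powr_power)
  finally show ?thesis by (simp only: mult.assoc)
qed

section \<open>Mixed Lebesgue norms of Gaussians\<close>

lemma nn_integral_gaussian:
  fixes s :: "'a::euclidean_space" and t :: real
  assumes t: "t > 0"
  shows "(\<integral>\<^sup>+x. ennreal (exp (- t * (norm (x - s))\<^sup>2)) \<partial>lborel) = ennreal ((pi / t) powr (real DIM('a) / 2))"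
proof -
  have one_dim: "(\<integral>\<^sup>+u. ennreal (exp (- t * u\<^sup>2)) \<partial>lborel) = ennreal (sqrt (pi / t))"
    using has_bochner_integral_exp_quadratic[OF t, of 0]
    by (subst nn_integral_eq_integral) (auto simp: has_bochner_integral_iff)
  have "(\<integral>\<^sup>+x. ennreal (exp (- t * (norm (x - s))\<^sup>2)) \<partial>lborel)
      = (\<integral>\<^sup>+x. ennreal (exp (- t * (norm (x - s))\<^sup>2)) \<partial>(distr lborel borel ((+) s)))"
    by (simp add: lborel_distr_plus)
  also have "\<dots> = (\<integral>\<^sup>+x. ennreal (exp (- t * (norm (x::'a))\<^sup>2)) \<partial>lborel)"
    by (subst nn_integral_distr) auto
  also have "\<dots> = (\<integral>\<^sup>+x. (\<Prod>b\<in>Basis. ennreal (exp (- t * ((x::'a) \<bullet> b)\<^sup>2))) \<partial>lborel)"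
    by (simp add: power2_norm_eq_sum_Basis sum_distrib_left exp_sum prod_ennreal)
  also have "\<dots> = (\<Prod>b\<in>(Basis::'a set). ennreal (sqrt (pi / t)))"
    using one_dim by (subst nn_integral_lborel_prod) simp_all
  also have "\<dots> = ennreal ((pi / t) powr (real DIM('a) / 2))"
    using t by (simp add: ennreal_power powr_half_sqrt[symmetric] powr_power)
  finally show ?thesis .
qed

lemma ennreal_le_if_AE_le_continuous:
  fixes g :: "'a::euclidean_space \<Rightarrow> real"
  assumes g: "continuous_on UNIV g" and AE: "AE x in lborel. ennreal (g x) \<le> c"
  shows "ennreal (g s) \<le> c"
proof (rule ccontr)
  assume "\<not> ennreal (g s) \<le> c"
  then obtain r where r: "c = ennreal r" "0 \<le> r" "r < g s"
    by (cases c) (auto simp: ennreal_less_iff not_le)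
  have "open {x. r < g x}" using g by (intro open_Collect_less continuous_intros) auto
  then obtain \<delta> where \<delta>: "\<delta> > 0" "ball s \<delta> \<subseteq> {x. r < g x}" using r(3) by (meson mem_Collect_eq openE)
  from AE obtain N where N: "{x \<in> space lborel. \<not> ennreal (g x) \<le> c} \<subseteq> N" "N \<in> sets lborel"
      "emeasure lborel N = 0"
    by (auto elim!: AE_E)
  have "ball s \<delta> \<subseteq> N" using \<delta>(2) N(1) r(1,2) by (auto simp: ennreal_le_iff2 not_le)
  then have "emeasure lborel (ball s \<delta>) = 0" using N(2,3) by (metis emeasure_mono le_zero_eq)
  moreover have "emeasure lborel (ball s \<delta>) = ennreal (measure lborel (ball s \<delta>))"
    using emeasure_lborel_ball_finite[of s \<delta>] by (simp add: emeasure_eq_ennreal_measure less_top)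
  moreover have "measure lborel (ball s \<delta>) > 0" using \<delta>(1) by (rule content_ball_pos)
  ultimately show False by simp
qed

definition gauss_Lp_const :: "ennreal \<Rightarrow> nat \<Rightarrow> real" where
  "gauss_Lp_const p d = (if p = \<infinity> then 1 else enn2real p powr (- real d / (2 * enn2real p)))"

lemma gauss_Lp_const_pos: "1 \<le> p \<Longrightarrow> gauss_Lp_const p d > 0"
  by (cases p) (auto simp: gauss_Lp_const_def ennreal_ge_1)

lemma Inf_AE_bound_gaussian:
  fixes s :: "'a::euclidean_space"
  assumes K: "K \<ge> 0" and c: "c > 0"
  shows "Inf {c'. AE x in lborel. ennreal (K * exp (- c * (norm (x - s))\<^sup>2)) \<le> c'} = ennreal K"
proof (rule antisym)
  show "Inf {c'. AE x in lborel. ennreal (K * exp (- c * (norm (x - s))\<^sup>2)) \<le> c'} \<le> ennreal K"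
    using K c by (intro Inf_lower) (auto intro!: always_eventually mult_left_le)
  have cont: "continuous_on UNIV (\<lambda>x::'a. K * exp (- c * (norm (x - s))\<^sup>2))"
    by (intro continuous_intros)
  show "ennreal K \<le> Inf {c'. AE x in lborel. ennreal (K * exp (- c * (norm (x - s))\<^sup>2)) \<le> c'}"
    using ennreal_le_if_AE_le_continuous[OF cont, of _ s] by (intro Inf_greatest) simp
qed

lemma Lp_norm_gaussian:
  fixes s :: "'a::euclidean_space"
  assumes K: "K \<ge> 0" and c: "c > 0" and p: "1 \<le> p"
  shows "Lp_norm p (\<lambda>x::'a. ennreal (K * exp (- c * (norm (x - s))\<^sup>2))) =
    ennreal (K * gauss_Lp_const p DIM('a) * (pi / c) powr (real DIM('a) / 2 * enn2real (inverse p)))"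
proof (cases "p = \<infinity>")
  case True
  then show ?thesis using Inf_AE_bound_gaussian[OF K c] c by (simp add: Lp_norm_def gauss_Lp_const_def)
next
  case False
  then obtain P where P: "p = ennreal P" "P \<ge> 1"
    using p by (cases p) (auto simp: ennreal_ge_1)
  have cP: "c * P > 0" using c P by simp
  have epow_eq: "epow (ennreal (K * exp (- c * (norm (x - s))\<^sup>2))) P
      = ennreal (K powr P * exp (- (c * P) * (norm (x - s))\<^sup>2))" for x
    using K by (simp add: epow_def powr_mult exp_powr_real)
  have "(\<integral>\<^sup>+x. epow (ennreal (K * exp (- c * (norm (x - s))\<^sup>2))) P \<partial>lborel)
      = (\<integral>\<^sup>+x. ennreal (K powr P) * ennreal (exp (- (c * P) * (norm (x - s))\<^sup>2)) \<partial>lborel)"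
    unfolding epow_eq by (simp add: ennreal_mult)
  also have "\<dots> = ennreal (K powr P * (pi / (c * P)) powr (real DIM('a) / 2))"
    using nn_integral_gaussian[OF cP, of s] by (subst nn_integral_cmult) (auto simp: ennreal_mult)
  finally have integral_eq:
    "(\<integral>\<^sup>+x. epow (ennreal (K * exp (- c * (norm (x - s))\<^sup>2))) P \<partial>lborel) = \<dots>" .
  have "Lp_norm p (\<lambda>x::'a. ennreal (K * exp (- c * (norm (x - s))\<^sup>2))) =
      epow (\<integral>\<^sup>+x. epow (ennreal (K * exp (- c * (norm (x - s))\<^sup>2))) P \<partial>lborel) (1 / P)"
    using P by (simp add: Lp_norm_def)
  also have "\<dots> = epow (ennreal (K powr P * (pi / (c * P)) powr (real DIM('a) / 2))) (1 / P)"
    unfolding integral_eq ..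
  also have "\<dots> = ennreal (K * P powr (- real DIM('a) / (2 * P)) * (pi / c) powr (real DIM('a) / 2 * (1 / P)))"
  proof -
    have "(K powr P * (pi / (c * P)) powr (real DIM('a) / 2)) powr (1 / P) =
        K * P powr (- real DIM('a) / (2 * P)) * (pi / c) powr (real DIM('a) / 2 * (1 / P))"
      using K P c by (simp add: powr_mult powr_powr powr_divide powr_minus_divide field_simps)
    then show ?thesis by (simp add: epow_def)
  qed
  finally show ?thesis
    using P by (simp add: gauss_Lp_const_def inverse_ennreal inverse_eq_divide)
qed

lemma Lp_norm_stft_gauss_chirp:
  fixes a b :: real and \<omega> :: "'a::euclidean_space"
  assumes a: "a > 0" and p: "1 \<le> p"
  defines "D \<equiv> (a + 1)\<^sup>2 + b\<^sup>2" and "A \<equiv> a * (a + 1) + b\<^sup>2"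
  shows "Lp_norm p (\<lambda>x. ennreal (norm (stft gauss_window (gauss_chirp a b) x \<omega>))) =
    ennreal (D powr (- real DIM('a) / 4) * gauss_Lp_const p DIM('a) *
      (D / A) powr (real DIM('a) / 2 * enn2real (inverse p)) * exp (- (pi * a / A) * (norm (\<omega> - 0))\<^sup>2))"
proof -
  have D0: "D > 0" using a by (simp add: D_def add_pos_nonneg)
  have A0: "A > 0" using a by (simp add: A_def add_pos_nonneg)
  have "Lp_norm p (\<lambda>x. ennreal (norm (stft gauss_window (gauss_chirp a b) x \<omega>))) =
      Lp_norm p (\<lambda>x. ennreal ((D powr (- real DIM('a) / 4) * exp (- pi * a / A * (norm \<omega>)\<^sup>2)) *
        exp (- (pi * A / D) * (norm (x - (- (b / A)) *\<^sub>R \<omega>))\<^sup>2)))"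
    unfolding norm_stft_gauss_chirp[OF a] D_def A_def by (simp add: mult_ac)
  also have "\<dots> = ennreal (D powr (- real DIM('a) / 4) * exp (- pi * a / A * (norm \<omega>)\<^sup>2) *
      gauss_Lp_const p DIM('a) * (pi / (pi * A / D)) powr (real DIM('a) / 2 * enn2real (inverse p)))"
    using A0 D0 p by (intro Lp_norm_gaussian) simp_all
  finally show ?thesis using A0 by (simp add: mult_ac)
qed

lemma mod_norm_gauss_chirp:
  fixes a b :: real and p q :: ennreal
  assumes a: "a > 0" and p: "1 \<le> p" and q: "1 \<le> q"
  defines "d \<equiv> real DIM('a::euclidean_space)" and "ip \<equiv> enn2real (inverse p)" and "iq \<equiv> enn2real (inverse q)"
  shows "mod_norm p q (gauss_window :: 'a \<Rightarrow> complex) (gauss_chirp a b) =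
    ennreal (gauss_Lp_const p DIM('a) * gauss_Lp_const q DIM('a) *
      (((a + 1)^2 + b^2) powr (d / 2 * (ip - 1 / 2)) /
       (a powr (d / 2 * iq) * (a * (a + 1) + b^2) powr (d / 2 * (ip - iq)))))"
proof -
  define D where "D = (a + 1)\<^sup>2 + b\<^sup>2"
  define A where "A = a * (a + 1) + b\<^sup>2"
  have D0: "D > 0" using a by (simp add: D_def add_pos_nonneg)
  have A0: "A > 0" using a by (simp add: A_def add_pos_nonneg)
  define K where "K = D powr (- d / 4) * gauss_Lp_const p DIM('a) * (D / A) powr (d / 2 * ip)"
  have K: "K \<ge> 0"
    using gauss_Lp_const_pos[OF p, of "DIM('a)"] unfolding K_def by (intro mult_nonneg_nonneg) auto
  have "mod_norm p q (gauss_window :: 'a \<Rightarrow> complex) (gauss_chirp a b) =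
      Lp_norm q (\<lambda>\<omega>::'a. ennreal (K * exp (- (pi * a / A) * (norm (\<omega> - 0))\<^sup>2)))"
    unfolding mod_norm_def Lp_norm_stft_gauss_chirp[OF a p] K_def D_def A_def d_def ip_def ..
  also have "\<dots> = ennreal (K * gauss_Lp_const q DIM('a) * (pi / (pi * a / A)) powr (d / 2 * iq))"
    using K a A0 q unfolding d_def iq_def by (intro Lp_norm_gaussian) simp_all
  also have "K * gauss_Lp_const q DIM('a) * (pi / (pi * a / A)) powr (d / 2 * iq) =
      gauss_Lp_const p DIM('a) * gauss_Lp_const q DIM('a) *
      (D powr (d / 2 * (ip - 1 / 2)) / (a powr (d / 2 * iq) * A powr (d / 2 * (ip - iq))))"
  proof -
    have "D powr (- d / 4) * (D / A) powr (d / 2 * ip) * (A / a) powr (d / 2 * iq) =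
        D powr (- d / 4) * D powr (d / 2 * ip) /
        (a powr (d / 2 * iq) * (A powr (d / 2 * ip) / A powr (d / 2 * iq)))"
      using a A0 D0 by (simp add: powr_divide)
    also have "\<dots> = D powr (- d / 4 + d / 2 * ip) / (a powr (d / 2 * iq) * A powr (d / 2 * ip - d / 2 * iq))"
      by (simp only: powr_add powr_diff)
    also have "- d / 4 + d / 2 * ip = d / 2 * (ip - 1 / 2)"
      by (simp add: algebra_simps)
    also have "d / 2 * ip - d / 2 * iq = d / 2 * (ip - iq)"
      by (simp add: algebra_simps)
    finally have "D powr (- d / 4) * (D / A) powr (d / 2 * ip) * (A / a) powr (d / 2 * iq) =
        D powr (d / 2 * (ip - 1 / 2)) / (a powr (d / 2 * iq) * A powr (d / 2 * (ip - iq)))" .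
    then show ?thesis using a by (simp add: K_def mult_ac)
  qed
  finally show ?thesis unfolding D_def A_def .
qed

theorem lemma2p4:
  fixes p q :: ennreal
  assumes "1 \<le> p" and "1 \<le> q"
  shows "\<exists>C>0. \<forall>a>0. \<forall>b.
    (let d = real DIM('a::euclidean_space); ip = enn2real (inverse p); iq = enn2real (inverse q);
         R = ((a + 1)^2 + b^2) powr (d / 2 * (ip - 1 / 2)) /
             (a powr (d / 2 * iq) * (a * (a + 1) + b^2) powr (d / 2 * (ip - iq)));
         N = mod_norm p q (gauss_window :: 'a \<Rightarrow> complex) (gauss_chirp a b)
     in N \<le> ennreal (C * R) \<and> ennreal R \<le> ennreal C * N)"
proof -
  define k where "k = gauss_Lp_const p DIM('a) * gauss_Lp_const q DIM('a)"
  define C where "C = max k (1 / k)"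
  have k: "k > 0" using gauss_Lp_const_pos assms by (simp add: k_def)
  have C: "C > 0" "k \<le> C" "1 \<le> C * k" using k by (auto simp: C_def max_def field_simps)
  show ?thesis
  proof (intro exI[of _ C] conjI allI impI \<open>C > 0\<close>)
    fix a b :: real assume a: "a > 0"
    define R where "R = ((a + 1)^2 + b^2) powr (real DIM('a) / 2 * (enn2real (inverse p) - 1 / 2)) /
      (a powr (real DIM('a) / 2 * enn2real (inverse q)) *
       (a * (a + 1) + b^2) powr (real DIM('a) / 2 * (enn2real (inverse p) - enn2real (inverse q))))"
    have R: "R \<ge> 0" by (simp add: R_def)
    have N: "mod_norm p q (gauss_window :: 'a \<Rightarrow> complex) (gauss_chirp a b) = ennreal (k * R)"
      using mod_norm_gauss_chirp[OF a assms] by (simp add: R_def k_def)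
    have upper: "k * R \<le> C * R" using C R by (intro mult_right_mono)
    have lower: "R \<le> C * (k * R)" using C R by (simp add: mult.assoc[symmetric] mult_le_cancel_right1)
    show "let d = real DIM('a); ip = enn2real (inverse p); iq = enn2real (inverse q);
         R = ((a + 1)^2 + b^2) powr (d / 2 * (ip - 1 / 2)) /
             (a powr (d / 2 * iq) * (a * (a + 1) + b^2) powr (d / 2 * (ip - iq)));
         N = mod_norm p q (gauss_window :: 'a \<Rightarrow> complex) (gauss_chirp a b)
     in N \<le> ennreal (C * R) \<and> ennreal R \<le> ennreal C * N"
      unfolding Let_def R_def[symmetric] N using upper lower C k R
      by (simp add: ennreal_leI ennreal_mult[symmetric])
  qed
qed

end
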